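(* Let $\triangle$ be an apexed triangle with apex $a$, bottom side $bc$ and definer $s$, and let $x\in \mathsf{rCell}(\triangle)$. Let $y$ be the point where the ray from $a$ through $x$ meets the bottom side $bc$. Then the line segment $xy$ is contained in $\mathsf{rCell}(\triangle)$.
   Context: $P$ is a simple polygon, $S$ a finite set of points in $P$ with $|S|\ge 2$, and $d(x,y)$ the geodesic distance in $P$ (length of the shortest path between $x$ and $y$ contained in $P$). $\mathsf{Cell}(S,s)=\{x\in P: d(x,s)>d(x,s')\ \forall s'\in S\setminus\{s\}\}$. An apexed triangle is a Euclidean triangle $\triangle\subseteq P$ with corners $a,b,c$ such that $a$ (the apex) is a vertex of $P$, $b$ and $c$ lie on a common edge of $P$ (the segment $bc$ is the bottom side), together with a site $s\in S$ (the definer) such that $d(x,s)=\|x-a\|+d(a,s)$ for every $x\in\triangle$, where $\|\cdot\|$ is the Euclidean norm. The refined cell of $\triangle$ is $\mathsf{rCell}(\triangle)=\big(\mathrm{int}(\triangle)\cup (bc\setminus\{b,c\})\big)\cap\mathsf{Cell}(S,s)$. *)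

theory Defs
  imports "HOL-Analysis.Analysis"
begin

fun polyline :: "complex list \<Rightarrow> real \<Rightarrow> complex" where
  "polyline [] = linepath 0 0"
| "polyline [v] = linepath v v"
| "polyline [v, w] = linepath v w"
| "polyline (v # w # u # vs) = linepath v w +++ polyline (w # u # vs)"

definition boundary_curve :: "complex list \<Rightarrow> real \<Rightarrow> complex" where
  "boundary_curve vs = polyline (vs @ [hd vs])"

definition poly_edge :: "complex list \<Rightarrow> nat \<Rightarrow> complex set" where
  "poly_edge vs i = closed_segment (vs ! i) (vs ! ((i + 1) mod length vs))"

definition simple_polygon :: "complex set \<Rightarrow> complex list \<Rightarrow> bool" where
  "simple_polygon P vs \<longleftrightarrow>
     length vs \<ge> 3 \<and>
     simple_path (boundary_curve vs) \<and>
     (\<forall>i < length vs. \<not> collinear {vs ! i, vs ! ((i + 1) mod length vs),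
                                       vs ! ((i + 2) mod length vs)}) \<and>
     P = path_image (boundary_curve vs) \<union> inside (path_image (boundary_curve vs))"

text \<open>L is an upper bound of the length of g (length = supremum of inscribed
  polygonal lengths over partitions of [0,1]).\<close>
definition length_le :: "(real \<Rightarrow> complex) \<Rightarrow> real \<Rightarrow> bool" where
  "length_le g L \<longleftrightarrow>
     (\<forall>(t :: nat \<Rightarrow> real) n. t 0 = 0 \<longrightarrow> t n = 1 \<longrightarrow> (\<forall>i<n. t i \<le> t (Suc i)) \<longrightarrow>
        (\<Sum>i<n. dist (g (t i)) (g (t (Suc i)))) \<le> L)"

definition geodesic_dist :: "complex set \<Rightarrow> complex \<Rightarrow> complex \<Rightarrow> real" where
  "geodesic_dist P x y =
     Inf {L. \<exists>g. path g \<and> path_image g \<subseteq> P \<and> pathstart g = x \<and> pathfinish g = y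
              \<and> length_le g L}"

definition Cell :: "complex set \<Rightarrow> complex set \<Rightarrow> complex \<Rightarrow> complex set" where
  "Cell P S s = {x \<in> P. \<forall>s' \<in> S - {s}. geodesic_dist P x s > geodesic_dist P x s'}"

definition apexed_triangle ::
  "complex set \<Rightarrow> complex list \<Rightarrow> complex set \<Rightarrow> complex \<Rightarrow> complex \<Rightarrow> complex \<Rightarrow> complex \<Rightarrow> bool" where
  "apexed_triangle P vs S a b c s \<longleftrightarrow>
     \<not> collinear {a, b, c} \<and>
     convex hull {a, b, c} \<subseteq> P \<and>
     a \<in> set vs \<and>
     (\<exists>i < length vs. b \<in> poly_edge vs i \<and> c \<in> poly_edge vs i) \<and>
     s \<in> S \<and>
     (\<forall>x \<in> convex hull {a, b, c}. geodesic_dist P x s = norm (x - a) + geodesic_dist P a s)"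

definition rCell :: "complex set \<Rightarrow> complex set \<Rightarrow> complex \<Rightarrow> complex \<Rightarrow> complex \<Rightarrow> complex \<Rightarrow> complex set" where
  "rCell P S a b c s =
     (interior (convex hull {a, b, c}) \<union> (closed_segment b c - {b, c})) \<inter> Cell P S s"

end

theory Submission
  imports Defs
begin

text \<open>Moving from x to a point z further along the ray from the apex a, the geodesic distance to
  the definer s grows by exactly the Euclidean distance |xz|, because it equals |za| + d(a,s) on the
  whole triangle. The geodesic distance to any other site grows by at most |xz|, since the segment xz
  lies in P. Hence the strict inequalities defining the cell of s persist from x to z. What remains is
  plane geometry: in affine coordinates x = a + \<beta>(b - a) + \<gamma>(c - a) the ray meets the line bc
  at parameter t = 1/(\<beta> + \<gamma>) \<ge> 1, and the points a + \<sigma>(x - a) with 1 \<le> \<sigma> \<le> t keep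
  both coordinates positive with sum at most 1.\<close>

lemma dist_linepath: "dist (linepath p q u) (linepath p q v) = \<bar>u - v\<bar> * dist p q"
proof -
  have "linepath p q u - linepath p q v = (u - v) *\<^sub>R (q - p)"
    by (simp add: linepath_def algebra_simps)
  then show ?thesis by (simp add: dist_norm norm_minus_commute)
qed

text \<open>max 0 (2u - 1) and min 1 (2u) reparametrise the two halves of the join, so that summing
  this bound over a partition telescopes in the segment part.\<close>
lemma dist_linepath_join_le:
  assumes "g 0 = q" and "u \<le> v"
  shows "dist ((linepath p q +++ g) u) ((linepath p q +++ g) v)
    \<le> dist (g (max 0 (2 * u - 1))) (g (max 0 (2 * v - 1))) + dist p q * (min 1 (2 * v) - min 1 (2 * u))"
proof -
  consider "v \<le> 1/2" | "u > 1/2" | "u \<le> 1/2" "v > 1/2" by linarith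
  then show ?thesis
  proof cases
    case 1
    then show ?thesis
      using assms by (simp add: joinpaths_def dist_linepath algebra_simps)
  next
    case 2
    then show ?thesis
      using assms by (simp add: joinpaths_def)
  next
    case 3
    have "dist (linepath p q (2 * u)) (g (2 * v - 1))
        \<le> dist (linepath p q (2 * u)) (linepath p q 1) + dist q (g (2 * v - 1))"
      using dist_triangle by (simp add: linepath_1')
    also have "dist (linepath p q (2 * u)) (linepath p q 1) = (1 - 2 * u) * dist p q"
      using 3 by (simp add: dist_linepath)
    finally show ?thesis
      using 3 assms by (simp add: joinpaths_def algebra_simps)
  qed
qed

lemma length_le_linepath_join:
  assumes "pathstart g = q" and "length_le g L"
  shows "length_le (linepath p q +++ g) (dist p q + L)"
  unfolding length_le_def
proof (intro allI impI)
  fix t :: "nat \<Rightarrow> real" and n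
  assume t0: "t 0 = 0" and tn: "t n = 1" and mono: "\<forall>i<n. t i \<le> t (Suc i)"
  define u where "u i = max 0 (2 * t i - 1)" for i
  define w where "w i = min 1 (2 * t i)" for i
  have "(\<Sum>i<n. dist ((linepath p q +++ g) (t i)) ((linepath p q +++ g) (t (Suc i))))
      \<le> (\<Sum>i<n. dist (g (u i)) (g (u (Suc i))) + dist p q * (w (Suc i) - w i))"
    using assms(1) mono unfolding u_def w_def pathstart_def
    by (intro sum_mono dist_linepath_join_le) auto
  also have "\<dots> = (\<Sum>i<n. dist (g (u i)) (g (u (Suc i)))) + dist p q * (w n - w 0)"
    by (simp add: sum.distrib sum_distrib_left[symmetric] sum_lessThan_telescope)
  also have "(\<Sum>i<n. dist (g (u i)) (g (u (Suc i)))) \<le> L"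
  proof -
    have "u 0 = 0" "u n = 1" "\<forall>i<n. u i \<le> u (Suc i)"
      using t0 tn mono by (auto simp: u_def)
    then show ?thesis
      using assms(2) unfolding length_le_def by blast
  qed
  also have "w n - w 0 = 1"
    using t0 tn by (simp add: w_def)
  finally show "(\<Sum>i<n. dist ((linepath p q +++ g) (t i)) ((linepath p q +++ g) (t (Suc i))))
      \<le> dist p q + L"
    by simp
qed

lemma length_le_nonneg:
  assumes "length_le g L"
  shows "0 \<le> L"
proof -
  have "dist (g 0) (g 1) \<le> L"
    using assms[unfolded length_le_def, rule_format, of real 1] by simp
  then show ?thesis by (meson zero_le_dist order_trans)
qed

definition path_lengths :: "complex set \<Rightarrow> complex \<Rightarrow> complex \<Rightarrow> real set" where
  "path_lengths P x y = {L. \<exists>g. path g \<and> path_image g \<subseteq> P \<and> pathstart g = x \<and> pathfinish g = y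
                           \<and> length_le g L}"

lemma geodesic_dist_eq_Inf_path_lengths: "geodesic_dist P x y = Inf (path_lengths P x y)"
  by (simp add: geodesic_dist_def path_lengths_def)

lemma bdd_below_path_lengths: "bdd_below (path_lengths P x y)"
  by (rule bdd_belowI[of _ 0]) (auto simp: path_lengths_def intro: length_le_nonneg)

lemma path_lengths_linepath_join:
  assumes "L \<in> path_lengths P q y" and "closed_segment p q \<subseteq> P"
  shows "dist p q + L \<in> path_lengths P p y"
proof -
  obtain g where g: "path g" "path_image g \<subseteq> P" "pathstart g = q" "pathfinish g = y" "length_le g L"
    using assms(1) by (auto simp: path_lengths_def)
  then show ?thesis
    using assms(2) length_le_linepath_join[OF g(3,5)]
    unfolding path_lengths_def by (intro CollectI exI[of _ "linepath p q +++ g"]) (auto simp: path_image_join)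
qed

text \<open>If no path in P joins q to y, then none joins p to y either, and both geodesic distances
  are the same junk value Inf {}; so no connectivity hypothesis is needed.\<close>
lemma geodesic_dist_le_segment:
  assumes "closed_segment p q \<subseteq> P"
  shows "geodesic_dist P p y \<le> dist p q + geodesic_dist P q y"
proof (cases "path_lengths P q y = {}")
  case True
  have "path_lengths P p y = {}"
    using path_lengths_linepath_join[of _ P p y q] assms True by (auto simp: closed_segment_commute)
  then show ?thesis
    using True by (simp add: geodesic_dist_eq_Inf_path_lengths)
next
  case False
  have "geodesic_dist P p y - dist p q \<le> L" if "L \<in> path_lengths P q y" for L
    using cInf_lower[OF path_lengths_linepath_join[OF that assms] bdd_below_path_lengths]
    by (simp add: geodesic_dist_eq_Inf_path_lengths)
  then have "geodesic_dist P p y - dist p q \<le> geodesic_dist P q y"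
    using False unfolding geodesic_dist_eq_Inf_path_lengths by (intro cInf_greatest) auto
  then show ?thesis by simp
qed

lemma Cell_extend_along_segment:
  assumes "x \<in> Cell P S s" and "z \<in> P" and "closed_segment z x \<subseteq> P"
    and "geodesic_dist P z s = dist z x + geodesic_dist P x s"
  shows "z \<in> Cell P S s"
  unfolding Cell_def
proof (intro CollectI conjI ballI)
  fix s' assume "s' \<in> S - {s}"
  then have "geodesic_dist P x s' < geodesic_dist P x s"
    using assms(1) by (auto simp: Cell_def)
  then show "geodesic_dist P z s' < geodesic_dist P z s"
    using geodesic_dist_le_segment[OF assms(3), of s'] assms(4) by linarith
qed (rule assms(2))

lemma triangle_coords_unique:
  fixes a b c :: "'a::real_vector"
  assumes "\<not> collinear {a, b, c}"
    and "a + \<beta> *\<^sub>R (b - a) + \<gamma> *\<^sub>R (c - a) = a + \<beta>' *\<^sub>R (b - a) + \<gamma>' *\<^sub>R (c - a)"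
  shows "\<beta> = \<beta>' \<and> \<gamma> = \<gamma>'"
proof -
  have "\<not> collinear {0, b - a, c - a}"
    using assms(1) collinear_3[of b a c] by (simp add: insert_commute)
  then have nc: "\<not> collinear {0, c - a, b - a}"
    by (simp add: insert_commute)
  have eq: "(\<beta> - \<beta>') *\<^sub>R (b - a) = (\<gamma>' - \<gamma>) *\<^sub>R (c - a)"
    using assms(2) by (simp add: algebra_simps)
  show ?thesis
  proof (cases "\<beta> = \<beta>'")
    case True
    then show ?thesis
      using eq nc collinear_lemma by fastforce
  next
    case False
    then have "b - a = inverse (\<beta> - \<beta>') *\<^sub>R ((\<beta> - \<beta>') *\<^sub>R (b - a))"
      by simp
    also have "\<dots> = (inverse (\<beta> - \<beta>') * (\<gamma>' - \<gamma>)) *\<^sub>R (c - a)"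
      using eq by simp
    finally show ?thesis
      using nc collinear_lemma by blast
  qed
qed

lemma closed_segment_triangle_coords:
  fixes a b c :: "'a::real_vector"
  assumes "\<not> collinear {a, b, c}" and "y \<in> closed_segment b c"
    and "y = a + \<beta> *\<^sub>R (b - a) + \<gamma> *\<^sub>R (c - a)"
  shows "\<beta> + \<gamma> = 1"
proof -
  obtain u where "y = (1 - u) *\<^sub>R b + u *\<^sub>R c"
    using assms(2) in_segment(1) by blast
  then have "a + \<beta> *\<^sub>R (b - a) + \<gamma> *\<^sub>R (c - a) = a + (1 - u) *\<^sub>R (b - a) + u *\<^sub>R (c - a)"
    using assms(3) by (simp add: algebra_simps)
  then show ?thesis
    using triangle_coords_unique[OF assms(1)] by fastforce
qed

lemma interior_Un_open_segment_triangle: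
  fixes a b c :: "'a::euclidean_space"
  assumes "DIM('a) = 2" and "\<not> collinear {a, b, c}"
  shows "interior (convex hull {a, b, c}) \<union> open_segment b c =
    {a + \<beta> *\<^sub>R (b - a) + \<gamma> *\<^sub>R (c - a) | \<beta> \<gamma>. 0 < \<beta> \<and> 0 < \<gamma> \<and> \<beta> + \<gamma> \<le> 1}"
    (is "?lhs = ?rhs")
proof
  have "b \<noteq> c"
    using assms(2) by auto
  show "?lhs \<subseteq> ?rhs"
  proof
    fix v assume "v \<in> ?lhs"
    then consider (interior) "v \<in> interior (convex hull {a, b, c})" | (bottom) "v \<in> open_segment b c"
      by blast
    then show "v \<in> ?rhs"
    proof cases
      case interior
      then obtain \<alpha> \<beta> \<gamma> where "0 < \<alpha>" "0 < \<beta>" "0 < \<gamma>" "\<alpha> + \<beta> + \<gamma> = 1"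
          "v = \<alpha> *\<^sub>R a + \<beta> *\<^sub>R b + \<gamma> *\<^sub>R c"
        using interior_convex_hull_3_minimal[OF assms(2,1)] by auto
      then have "v = a + \<beta> *\<^sub>R (b - a) + \<gamma> *\<^sub>R (c - a)" "\<beta> + \<gamma> \<le> 1"
        by (auto simp: algebra_simps simp flip: scaleR_add_left)
      then show ?thesis
        using \<open>0 < \<beta>\<close> \<open>0 < \<gamma>\<close> by blast
    next
      case bottom
      then obtain u where "0 < u" "u < 1" "v = (1 - u) *\<^sub>R b + u *\<^sub>R c"
        using in_segment(2) by blast
      then have "v = a + (1 - u) *\<^sub>R (b - a) + u *\<^sub>R (c - a)"
        by (simp add: algebra_simps)
      then show ?thesis
        using \<open>0 < u\<close> \<open>u < 1\<close> by force
    qed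
  qed
  show "?rhs \<subseteq> ?lhs"
  proof
    fix v assume "v \<in> ?rhs"
    then obtain \<beta> \<gamma> where pos: "0 < \<beta>" "0 < \<gamma>" "\<beta> + \<gamma> \<le> 1"
      and v: "v = a + \<beta> *\<^sub>R (b - a) + \<gamma> *\<^sub>R (c - a)"
      by blast
    show "v \<in> ?lhs"
    proof (cases "\<beta> + \<gamma> = 1")
      case True
      then have "v = (1 - \<gamma>) *\<^sub>R b + \<gamma> *\<^sub>R c"
        using v by (simp add: algebra_simps flip: scaleR_add_left)
      then show ?thesis
        using pos True \<open>b \<noteq> c\<close> in_segment(2) by fastforce
    next
      case False
      have "v = (1 - \<beta> - \<gamma>) *\<^sub>R a + \<beta> *\<^sub>R b + \<gamma> *\<^sub>R c"
        using v by (simp add: algebra_simps)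
      then show ?thesis
        using pos False unfolding interior_convex_hull_3_minimal[OF assms(2,1)]
        by (intro UnI1 CollectI exI[of _ "1 - \<beta> - \<gamma>"] exI[of _ \<beta>] exI[of _ \<gamma>]) auto
    qed
  qed
qed

lemma dist_on_ray_beyond:
  fixes a x :: "'a::real_normed_vector"
  assumes "1 \<le> \<sigma>"
  shows "dist (a + \<sigma> *\<^sub>R (x - a)) a = dist (a + \<sigma> *\<^sub>R (x - a)) x + dist x a"
proof -
  have "a + \<sigma> *\<^sub>R (x - a) - x = (\<sigma> - 1) *\<^sub>R (x - a)"
    by (simp add: algebra_simps)
  then have "dist (a + \<sigma> *\<^sub>R (x - a)) x = (\<sigma> - 1) * norm (x - a)"
    using assms by (simp add: dist_norm)
  moreover have "dist (a + \<sigma> *\<^sub>R (x - a)) a = \<sigma> * norm (x - a)"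
    using assms by (simp add: dist_norm)
  ultimately show ?thesis
    by (simp add: dist_norm algebra_simps)
qed

lemma closed_segment_along_ray_in_open_triangle:
  fixes a b c x y z :: "'a::euclidean_space"
  assumes "DIM('a) = 2" and nc: "\<not> collinear {a, b, c}"
    and x: "x \<in> interior (convex hull {a, b, c}) \<union> open_segment b c"
    and y: "y \<in> closed_segment b c" "y = a + t *\<^sub>R (x - a)"
    and z: "z \<in> closed_segment x y"
  shows "z \<in> interior (convex hull {a, b, c}) \<union> open_segment b c \<and> dist z a = dist z x + dist x a"
proof -
  note open_triangle = interior_Un_open_segment_triangle[OF assms(1) nc]
  obtain \<beta> \<gamma> where pos: "0 < \<beta>" "0 < \<gamma>" "\<beta> + \<gamma> \<le> 1"
    and x_eq: "x = a + \<beta> *\<^sub>R (b - a) + \<gamma> *\<^sub>R (c - a)"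
    using x unfolding open_triangle by blast
  have "y = a + (t * \<beta>) *\<^sub>R (b - a) + (t * \<gamma>) *\<^sub>R (c - a)"
    using y(2) by (simp add: x_eq algebra_simps)
  then have t_sum: "t * (\<beta> + \<gamma>) = 1"
    using closed_segment_triangle_coords[OF nc y(1)] by (simp add: distrib_left)
  then have "0 < t"
    using pos zero_less_mult_pos2[of t "\<beta> + \<gamma>"] by simp
  then have "1 \<le> t"
    using mult_left_mono[OF pos(3), of t] t_sum by simp
  obtain r where r: "0 \<le> r" "r \<le> 1" "z = (1 - r) *\<^sub>R x + r *\<^sub>R y"
    using z in_segment(1) by blast
  define \<sigma> where "\<sigma> = 1 + r * (t - 1)"
  have z_eq: "z = a + \<sigma> *\<^sub>R (x - a)"
    by (simp add: r(3) y(2) \<sigma>_def algebra_simps)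
  have "1 \<le> \<sigma>"
    using r \<open>1 \<le> t\<close> by (simp add: \<sigma>_def)
  have "\<sigma> \<le> t"
    using mult_right_mono[OF r(2), of "t - 1"] \<open>1 \<le> t\<close> by (simp add: \<sigma>_def)
  have "z = a + (\<sigma> * \<beta>) *\<^sub>R (b - a) + (\<sigma> * \<gamma>) *\<^sub>R (c - a)"
    by (simp add: z_eq x_eq algebra_simps)
  moreover have "\<sigma> * \<beta> + \<sigma> * \<gamma> \<le> 1"
    using mult_right_mono[OF \<open>\<sigma> \<le> t\<close>, of "\<beta> + \<gamma>"] pos t_sum by (simp add: distrib_left)
  moreover have "0 < \<sigma> * \<beta>" "0 < \<sigma> * \<gamma>"
    using pos \<open>1 \<le> \<sigma>\<close> by simp_all
  ultimately have "z \<in> interior (convex hull {a, b, c}) \<union> open_segment b c"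
    unfolding open_triangle by blast
  then show ?thesis
    using dist_on_ray_beyond[OF \<open>1 \<le> \<sigma>\<close>, of a x] z_eq by simp
qed

theorem mainTheorem7:
  fixes P S :: "complex set" and vs :: "complex list" and a b c s x y :: complex
  assumes "simple_polygon P vs"
    and "finite S" and "S \<subseteq> P" and "card S \<ge> 2"
    and "apexed_triangle P vs S a b c s"
    and "x \<in> rCell P S a b c s"
    and "y \<in> closed_segment b c" and "\<exists>t \<ge> 0. y = a + of_real t * (x - a)"
  shows "closed_segment x y \<subseteq> rCell P S a b c s"
proof
  fix z assume z: "z \<in> closed_segment x y"
  define T where "T = convex hull {a, b, c}"
  have nc: "\<not> collinear {a, b, c}" and "T \<subseteq> P"
    and s_dist: "\<forall>v \<in> T. geodesic_dist P v s = norm (v - a) + geodesic_dist P a s"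
    using assms(5) unfolding apexed_triangle_def T_def by auto
  have x: "x \<in> interior T \<union> open_segment b c" "x \<in> Cell P S s"
    using assms(6) unfolding rCell_def T_def open_segment_def by auto
  obtain t where "y = a + t *\<^sub>R (x - a)"
    using assms(8) by (auto simp: scaleR_conv_of_real)
  then have z_open: "z \<in> interior T \<union> open_segment b c" and z_dist: "dist z a = dist z x + dist x a"
    using closed_segment_along_ray_in_open_triangle[OF DIM_complex nc _ assms(7) _ z] x(1)
    unfolding T_def by auto
  have "closed_segment b c \<subseteq> T"
    unfolding T_def by (intro closed_segment_subset_convex_hull) (auto intro: hull_inc)
  then have open_sub: "interior T \<union> open_segment b c \<subseteq> T"
    using interior_subset segment_open_subset_closed by blast
  then have "closed_segment z x \<subseteq> T"
    using x(1) z_open unfolding T_def by (intro closed_segment_subset_convex_hull) auto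
  moreover have "geodesic_dist P z s = dist z x + geodesic_dist P x s"
  proof -
    have "x \<in> T" "z \<in> T"
      using open_sub x(1) z_open by auto
    then show ?thesis
      using s_dist z_dist by (simp add: dist_norm)
  qed
  ultimately have "z \<in> Cell P S s"
    using Cell_extend_along_segment[OF x(2)] \<open>T \<subseteq> P\<close> by auto
  then show "z \<in> rCell P S a b c s"
    using z_open unfolding rCell_def T_def open_segment_def by auto
qed

end
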